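(* For every $m\geq1$ and every $i\in\{1,\dots,N\}$, $$C^{(2m)}_{-i,i}\cdot v=G_i\, C^{(2m-1)}_{ii}\cdot v-\lambda_i\,C^{(2m-1)}_{-i,i}\cdot v.$$
   Context: Let $N\geq1$, $I=\{-N,\dots,-1,1,\dots,N\}$, and for $k\in I$ put $\bar k=0$ if $k>0$, $\bar k=1$ if $k<0$. The Lie superalgebra $\mathfrak{q}(N)$ over $\mathbb{C}$ is spanned by elements $F_{ij}$ ($i,j\in I$) with $F_{-i,-j}=F_{ij}$ (realized as $F_{ij}=E_{ij}+E_{-i,-j}\in\mathfrak{gl}(N|N)$), $F_{ij}$ of parity $\bar\imath+\bar\jmath\bmod 2$, and supercommutator $$[F_{ij}, F_{kl}] = \delta_{kj} F_{il} - (-1)^{(\bar{\imath}+ \bar{\jmath})(\bar{k} + \bar{l})} \delta_{il} F_{kj} + \delta_{k,-j} F_{-i,l} - (-1)^{(\bar{\imath} + \bar{\jmath})(\bar{k} + \bar{l})} \delta_{-i,l} F_{k,-j}.$$ For $n\geq1$ define $C^{(n)}_{ij}\in U(\mathfrak{q}(N))$ by $$C^{(n)}_{ij} = \sum_{k_1,\ldots,k_{n-1}\in I}F_{ik_1} (-1)^{\bar{k}_1} F_{k_1k_2} (-1)^{\bar{k}_2} \cdots F_{k_{n-2}k_{n-1}} (-1)^{\bar{k}_{n-1}} F_{k_{n-1}j}$$ (so $C^{(1)}_{ij}=F_{ij}$). For $i>0$ let $G_i=F_{-i,i}$ $(=F_{i,-i})$. Let $V$ be a representation of $\mathfrak{q}(N)$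 and $v\in V$ a vector such that $F_{ij}\cdot v=0$ whenever $|i|<|j|$, and $F_{ii}\cdot v=\lambda_i v$ for $i=1,\dots,N$, where $\lambda_1,\dots,\lambda_N\in\mathbb{C}$. *)

theory Defs
  imports Complex_Main
begin

definition Idx :: "nat \<Rightarrow> int set" where
  "Idx N = {-int N..-1} \<union> {1..int N}"

definition par :: "int \<Rightarrow> nat" where
  "par k = (if k < 0 then 1 else 0)"

definition psign :: "int \<Rightarrow> complex" where
  "psign k = (-1) ^ par k"

text \<open>A representation of q(N) on a complex module V (scalar multiplication scale):
  operators F i j, i,j in I, which are complex-linear, satisfy F(-i,-j) = F(i,j),
  and satisfy the defining supercommutator relations as operators on V
  (i.e. V is a module over U(q(N))).\<close>
definition is_qrep :: "nat \<Rightarrow> (complex \<Rightarrow> 'v::ab_group_add \<Rightarrow> 'v) \<Rightarrow> (int \<Rightarrow> int \<Rightarrow> 'v \<Rightarrow> 'v) \<Rightarrow> bool" where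
  "is_qrep N scale F \<longleftrightarrow>
     module scale \<and>
     (\<forall>i\<in>Idx N. \<forall>j\<in>Idx N. module_hom scale scale (F i j)) \<and>
     (\<forall>i\<in>Idx N. \<forall>j\<in>Idx N. F (-i) (-j) = F i j) \<and>
     (\<forall>i\<in>Idx N. \<forall>j\<in>Idx N. \<forall>k\<in>Idx N. \<forall>l\<in>Idx N. \<forall>x.
        (let e = ((-1::complex) ^ ((par i + par j) * (par k + par l))) in
          F i j (F k l x) - scale e (F k l (F i j x)) =
            (if k = j then F i l x else 0)
          - scale e (if i = l then F k j x else 0)
          + (if k = -j then F (-i) l x else 0)
          - scale e (if -i = l then F k (-j) x else 0)))"

text \<open>Action of C^(n)_{ij} on V: C^(1)_{ij} = F_{ij} and
  C^(n+1)_{ij} = sum_k F_{ik} (-1)^(bar k) C^(n)_{kj}. (n = 0 is unused.)\<close>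
fun Cop :: "nat \<Rightarrow> (complex \<Rightarrow> 'v::ab_group_add \<Rightarrow> 'v) \<Rightarrow> (int \<Rightarrow> int \<Rightarrow> 'v \<Rightarrow> 'v) \<Rightarrow> nat \<Rightarrow> int \<Rightarrow> int \<Rightarrow> 'v \<Rightarrow> 'v" where
  "Cop N scale F 0 i j x = 0"
| "Cop N scale F (Suc 0) i j x = F i j x"
| "Cop N scale F (Suc (Suc n)) i j x =
     (\<Sum>k\<in>Idx N. F i k (scale (psign k) (Cop N scale F (Suc n) k j x)))"

end

theory Submission imports Defs begin

text \<open>The recursion C^(n+1)_cd = \<Sum>_k F_ck (-1)^k C^(n)_kd shows by induction on n that the
  supercommutator of F_ab with C^(n)_cd is given by the same formula as with F_cd: when F_ab is
  moved through a product F_ck C^(n)_kd, the terms produced at the inner and at the outer factor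
  cancel, except those that reassemble C^(n+1). On the vector v this gives C^(n)_kj v = 0 for
  |k| < |j|, and it evaluates every term F_-i,k (-1)^k C^(2m-1)_ki v of C^(2m)_-i,i v: the terms
  with |k| < i vanish, k = \<plusminus>i give the two terms of the claim, and the terms with |k| > i cancel
  in pairs k, -k because C^(n)_-a,-b = (-1)^(n-1) C^(n)_ab.\<close>

lemma sum_if_zero: "(\<Sum>k\<in>A. if P then f k else 0) = (if P then sum f A else 0)"
  by simp

lemma finite_Idx [simp]: "finite (Idx N)"
  by (simp add: Idx_def)

lemma uminus_in_Idx: "k \<in> Idx N \<Longrightarrow> -k \<in> Idx N"
  by (auto simp: Idx_def)

lemma Idx_nonzero: "k \<in> Idx N \<Longrightarrow> k \<noteq> 0"
  by (auto simp: Idx_def)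

lemma psign_uminus: "k \<noteq> 0 \<Longrightarrow> psign (-k) = - psign k"
  by (simp add: psign_def par_def)

definition comm_sign :: "int \<Rightarrow> int \<Rightarrow> int \<Rightarrow> int \<Rightarrow> complex" where
  "comm_sign a b c d = (-1) ^ ((par a + par b) * (par c + par d))"

lemma comm_sign_mult: "comm_sign a b c k * comm_sign a b k d = comm_sign a b c d"
  by (simp add: comm_sign_def par_def power_add[symmetric])

lemma comm_sign_mult_left_commute:
  "comm_sign a b c k * (y * comm_sign a b k d) = y * comm_sign a b c d"
  by (metis comm_sign_mult mult.left_commute)

lemma comm_sign_psign: "comm_sign a b c b * psign b = comm_sign a b c a * psign a"
  by (simp add: comm_sign_def psign_def par_def power_add[symmetric])

lemma comm_sign_psign_uminus:
  "a \<noteq> 0 \<Longrightarrow> b \<noteq> 0 \<Longrightarrow> comm_sign a b c (-b) * psign (-b) = comm_sign a b c (-a) * psign (-a)"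
  by (cases "a < 0"; cases "b < 0"; cases "c < 0"; simp add: comm_sign_def psign_def par_def)

locale qrep =
  fixes N :: nat and scale :: "complex \<Rightarrow> 'v::ab_group_add \<Rightarrow> 'v" and F :: "int \<Rightarrow> int \<Rightarrow> 'v \<Rightarrow> 'v"
  assumes is_qrep: "is_qrep N scale F"
begin

abbreviation I :: "int set" where "I \<equiv> Idx N"
abbreviation C :: "nat \<Rightarrow> int \<Rightarrow> int \<Rightarrow> 'v \<Rightarrow> 'v" where "C \<equiv> Cop N scale F"

sublocale module scale
  using is_qrep by (simp add: is_qrep_def)

lemma F_hom: "a \<in> I \<Longrightarrow> b \<in> I \<Longrightarrow> module_hom scale scale (F a b)"
  using is_qrep by (simp add: is_qrep_def)

lemmas F_add = module_hom.add[OF F_hom]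
  and F_diff = module_hom.diff[OF F_hom]
  and F_minus = module_hom.neg[OF F_hom]
  and F_scale = module_hom.scale[OF F_hom]
  and F_zero = module_hom.zero[OF F_hom]
  and F_sum = module_hom.sum[OF F_hom]

lemma F_uminus_uminus: "a \<in> I \<Longrightarrow> b \<in> I \<Longrightarrow> F (-a) (-b) = F a b"
  using is_qrep by (simp add: is_qrep_def)

definition left_mult :: "(int \<Rightarrow> int \<Rightarrow> 'v \<Rightarrow> 'v) \<Rightarrow> int \<Rightarrow> int \<Rightarrow> 'v \<Rightarrow> 'v" where
  "left_mult D c d x = (\<Sum>k\<in>I. F c k (scale (psign k) (D k d x)))"

lemma Cop_Suc_0: "C (Suc 0) = F"
  by (intro ext) simp

lemma Cop_Suc_Suc: "C (Suc (Suc n)) = left_mult (C (Suc n))"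
  by (intro ext) (simp add: left_mult_def)

lemma left_mult_hom:
  assumes D: "\<And>k. k \<in> I \<Longrightarrow> module_hom scale scale (D k d)" and c: "c \<in> I"
  shows "module_hom scale scale (left_mult D c d)"
  unfolding module_hom_iff
proof (intro conjI allI)
  show "module scale" "module scale" by (rule module_axioms)+
  fix x y r
  have "F c k (scale (psign k) (D k d (x + y)))
      = F c k (scale (psign k) (D k d x)) + F c k (scale (psign k) (D k d y))" if "k \<in> I" for k
    using that c by (simp add: module_hom.add[OF D] F_add scale_right_distrib)
  then show "left_mult D c d (x + y) = left_mult D c d x + left_mult D c d y"
    by (simp add: left_mult_def sum.distrib[symmetric])
  have "F c k (scale (psign k) (D k d (scale r x))) = scale r (F c k (scale (psign k) (D k d x)))"
    if "k \<in> I" for k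
    using that c by (simp add: module_hom.scale[OF D] F_scale mult.commute)
  then show "left_mult D c d (scale r x) = scale r (left_mult D c d x)"
    by (simp add: left_mult_def scale_sum_right)
qed

lemma Cop_hom: "c \<in> I \<Longrightarrow> d \<in> I \<Longrightarrow> module_hom scale scale (C (Suc n) c d)"
proof (induction n arbitrary: c)
  case 0
  then show ?case using F_hom by (simp add: Cop_Suc_0)
next
  case (Suc n)
  show ?case unfolding Cop_Suc_Suc by (rule left_mult_hom) (use Suc in simp_all)
qed

lemmas Cop_scale = module_hom.scale[OF Cop_hom]
  and Cop_zero = module_hom.zero[OF Cop_hom]

text \<open>bracket X a b c d is the right-hand side of the defining relation for [F_ab, F_cd], with F
  replaced by the family X.\<close>
definition supercomm :: "int \<Rightarrow> int \<Rightarrow> (int \<Rightarrow> int \<Rightarrow> 'v \<Rightarrow> 'v) \<Rightarrow> int \<Rightarrow> int \<Rightarrow> 'v \<Rightarrow> 'v" where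
  "supercomm a b X c d x = F a b (X c d x) - scale (comm_sign a b c d) (X c d (F a b x))"

definition bracket :: "(int \<Rightarrow> int \<Rightarrow> 'v \<Rightarrow> 'v) \<Rightarrow> int \<Rightarrow> int \<Rightarrow> int \<Rightarrow> int \<Rightarrow> 'v \<Rightarrow> 'v" where
  "bracket X a b c d x =
     (if c = b then X a d x else 0) - scale (comm_sign a b c d) (if a = d then X c b x else 0)
   + (if c = -b then X (-a) d x else 0) - scale (comm_sign a b c d) (if -a = d then X c (-b) x else 0)"

lemma supercomm_F: "a \<in> I \<Longrightarrow> b \<in> I \<Longrightarrow> c \<in> I \<Longrightarrow> d \<in> I \<Longrightarrow>
    supercomm a b F c d x = bracket F a b c d x"
  using is_qrep unfolding is_qrep_def Let_def
  by (simp only: supercomm_def bracket_def comm_sign_def)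

lemma F_if_zero: "a \<in> I \<Longrightarrow> b \<in> I \<Longrightarrow> F a b (if P then x else 0) = (if P then F a b x else 0)"
  using F_zero by simp

lemma sum_bracket_left:
  assumes "a \<in> I" "b \<in> I" "c \<in> I"
  shows "(\<Sum>k\<in>I. scale (comm_sign a b c k) (F c k (scale (psign k) (bracket D a b k d x)))) =
      scale (comm_sign a b c b * psign b) (F c b (D a d x))
    - scale (comm_sign a b c d) (if a = d then left_mult D c b x else 0)
    + scale (comm_sign a b c (-b) * psign (-b)) (F c (-b) (D (-a) d x))
    - scale (comm_sign a b c d) (if -a = d then left_mult D c (-b) x else 0)"
  using assms uminus_in_Idx[OF assms(2)]
  by (simp add: bracket_def F_add F_diff F_scale F_if_zero if_distrib[of "scale _"]
      scale_right_distrib scale_right_diff_distrib comm_sign_mult_left_commute sum_if_zero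
      sum.distrib sum_subtractf left_mult_def scale_sum_right mult.commute[of _ "psign _"]
      cong: sum.cong if_cong split del: if_split)

lemma sum_bracket_right:
  assumes "a \<in> I" "b \<in> I" "c \<in> I"
  shows "(\<Sum>k\<in>I. bracket F a b c k (scale (psign k) (D k d x))) =
      (if c = b then left_mult D a d x else 0)
    - scale (comm_sign a b c a * psign a) (F c b (D a d x))
    + (if c = -b then left_mult D (-a) d x else 0)
    - scale (comm_sign a b c (-a) * psign (-a)) (F c (-b) (D (-a) d x))"
  using assms uminus_in_Idx[OF assms(1)] uminus_in_Idx[OF assms(2)]
  by (simp add: bracket_def sum.distrib sum_subtractf left_mult_def F_scale if_distrib[of "scale _"]
      cong: if_cong)

lemma supercomm_left_mult:
  assumes abc: "a \<in> I" "b \<in> I" "c \<in> I"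
    and D: "\<And>k. k \<in> I \<Longrightarrow> supercomm a b D k d x = bracket D a b k d x"
  shows "supercomm a b (left_mult D) c d x = bracket (left_mult D) a b c d x"
proof -
  define y where "y k = scale (psign k) (D k d x)" for k
  have summand:
    "F a b (F c k (y k)) - scale (comm_sign a b c d) (F c k (scale (psign k) (D k d (F a b x))))
      = scale (comm_sign a b c k) (F c k (scale (psign k) (bracket D a b k d x)))
      + bracket F a b c k (y k)" if k: "k \<in> I" for k
  proof -
    have "F a b (y k) =
        scale (psign k) (scale (comm_sign a b k d) (D k d (F a b x)) + bracket D a b k d x)"
      using D[OF k] abc by (simp add: y_def F_scale supercomm_def diff_eq_eq add.commute)
    moreover have "F a b (F c k (y k)) =
        scale (comm_sign a b c k) (F c k (F a b (y k))) + bracket F a b c k (y k)"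
      using supercomm_F[OF abc k] by (simp add: supercomm_def algebra_simps)
    ultimately show ?thesis
      using abc k by (simp add: F_add F_scale scale_right_distrib comm_sign_mult_left_commute
          mult.commute[of _ "psign k"])
  qed
  have "supercomm a b (left_mult D) c d x
      = (\<Sum>k\<in>I. scale (comm_sign a b c k) (F c k (scale (psign k) (bracket D a b k d x))))
      + (\<Sum>k\<in>I. bracket F a b c k (scale (psign k) (D k d x)))"
    using abc by (simp add: supercomm_def left_mult_def F_sum scale_sum_right summand
        sum_subtractf[symmetric] sum.distrib[symmetric] y_def[symmetric] cong: sum.cong)
  also have "\<dots> = bracket (left_mult D) a b c d x"
    unfolding sum_bracket_left[OF abc] sum_bracket_right[OF abc]
    using abc by (simp add: bracket_def comm_sign_psign comm_sign_psign_uminus Idx_nonzero)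
  finally show ?thesis .
qed

lemma supercomm_Cop:
  assumes "a \<in> I" "b \<in> I" "c \<in> I" "d \<in> I"
  shows "supercomm a b (C (Suc n)) c d x = bracket (C (Suc n)) a b c d x"
  using assms(3)
proof (induction n arbitrary: c)
  case 0
  then show ?case using assms supercomm_F by (simp add: Cop_Suc_0)
next
  case (Suc n)
  then show ?case unfolding Cop_Suc_Suc using assms by (intro supercomm_left_mult) simp_all
qed

lemma sum_Idx_uminus: "sum g I = (\<Sum>k\<in>I. g (-k))"
  by (rule sum.reindex_bij_witness[of _ uminus uminus]) (auto simp: uminus_in_Idx)

text \<open>Over \<complex> a vector equal to its negative is zero.\<close>
lemma sum_Idx_odd_eq_0:
  fixes g :: "int \<Rightarrow> 'v"
  assumes "\<And>k. k \<in> I \<Longrightarrow> g (-k) = - g k"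
  shows "sum g I = 0"
proof -
  have "sum g I = (\<Sum>k\<in>I. - g k)"
    by (subst sum_Idx_uminus) (simp add: assms)
  also have "\<dots> = - sum g I"
    by (rule sum_negf)
  finally have "sum g I = - sum g I" .
  then have "scale 2 (sum g I) = 0"
    by (metis add.right_inverse scale_left_distrib scale_one one_add_one)
  then have "scale (1/2) (scale 2 (sum g I)) = 0"
    by simp
  then show ?thesis by simp
qed

lemma Cop_uminus_uminus:
  assumes "a \<in> I" "b \<in> I"
  shows "C (Suc n) (-a) (-b) x = scale ((-1) ^ n) (C (Suc n) a b x)"
  using assms(1)
proof (induction n arbitrary: a x)
  case 0
  then show ?case using assms by (simp add: F_uminus_uminus)
next
  case (Suc n)
  have "C (Suc (Suc n)) (-a) (-b) x
      = (\<Sum>k\<in>I. F (-a) (-k) (scale (psign (-k)) (C (Suc n) (-k) (-b) x)))"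
    by (subst sum_Idx_uminus) simp
  also have "\<dots> = (\<Sum>k\<in>I. scale ((-1) ^ Suc n) (F a k (scale (psign k) (C (Suc n) k b x))))"
    using Suc assms by (intro sum.cong)
      (simp_all add: F_uminus_uminus psign_uminus Idx_nonzero F_scale F_minus mult.commute)
  finally show ?case by (simp add: scale_sum_right)
qed

end

locale highest_weight = qrep N scale F
    for N :: nat and scale :: "complex \<Rightarrow> 'v::ab_group_add \<Rightarrow> 'v" and F +
  fixes v :: 'v and lam :: "int \<Rightarrow> complex"
  assumes raising_zero: "\<And>i j. i \<in> I \<Longrightarrow> j \<in> I \<Longrightarrow> \<bar>i\<bar> < \<bar>j\<bar> \<Longrightarrow> F i j v = 0"
    and weight: "\<And>i. i \<in> {1..int N} \<Longrightarrow> F i i v = scale (lam i) v"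
begin

lemma Cop_raising_zero:
  "k \<in> I \<Longrightarrow> j \<in> I \<Longrightarrow> \<bar>k\<bar> < \<bar>j\<bar> \<Longrightarrow> C (Suc n) k j v = 0"
proof (induction n arbitrary: k)
  case 0
  then show ?case using raising_zero by simp
next
  case (Suc n)
  have "F k l (scale (psign l) (C (Suc n) l j v)) = 0" if l: "l \<in> I" for l
  proof (cases "\<bar>l\<bar> < \<bar>j\<bar>")
    case True
    then show ?thesis using Suc.IH l Suc.prems by (simp add: F_zero)
  next
    case False
    \<comment> \<open>then F_kl v = 0, so F_kl C_lj v = [F_kl, C_lj] v = C_kj v, which vanishes by induction\<close>
    then have "F k l (C (Suc n) l j v) = C (Suc n) k j v"
      using supercomm_Cop[OF Suc.prems(1) l l Suc.prems(2), of n v] raising_zero[OF Suc.prems(1) l]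
        Suc.prems l Idx_nonzero[OF l]
      by (auto simp: supercomm_def bracket_def Cop_zero)
    then show ?thesis using Suc l by (simp add: F_scale)
  qed
  then show ?case by (simp add: Cop_Suc_Suc left_mult_def)
qed

lemma Cop_uminus_diag_weight:
  assumes i: "i \<in> {1..int N}"
  shows "F i i (C (Suc n) (-i) i v) = scale (lam i) (C (Suc n) (-i) i v)"
proof -
  have iI: "i \<in> I" "-i \<in> I" "i \<noteq> -i"
    using i by (auto simp: Idx_def)
  have "comm_sign i i (-i) i = 1"
    by (simp add: comm_sign_def par_def)
  then show ?thesis
    using supercomm_Cop[OF iI(1,1,2,1), of n v] weight[OF i] iI
    by (simp add: supercomm_def bracket_def Cop_scale)
qed

lemma F_uminus_Cop_outer:
  assumes i: "i \<in> {1..int N}" and k: "k \<in> I" "i < \<bar>k\<bar>"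
  shows "F (-i) k (C (Suc n) k i v) = C (Suc n) (-i) i v - C (Suc n) k (-k) v"
proof -
  have iI: "i \<in> I" "-i \<in> I"
    using i by (auto simp: Idx_def)
  have "comm_sign (-i) k k i = 1"
    using i by (simp add: comm_sign_def par_def)
  moreover have "F (-i) k v = 0"
    using raising_zero[OF iI(2) k(1)] i k by simp
  ultimately show ?thesis
    using supercomm_Cop[OF iI(2) k(1) k(1) iI(1), of n v] Cop_zero[OF k(1) iI(1)] i k
      Idx_nonzero[OF k(1)]
    by (simp add: supercomm_def bracket_def)
qed

lemma Cop_even_uminus_diag:
  assumes i: "i \<in> {1..int N}"
  shows "C (Suc (Suc (2*n))) (-i) i v
      = F (-i) i (C (Suc (2*n)) i i v) - scale (lam i) (C (Suc (2*n)) (-i) i v)"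
proof -
  have iI: "i \<in> I" "-i \<in> I" "i > 0"
    using i by (auto simp: Idx_def)
  define D where "D = C (Suc (2*n))"
  define outer where
    "outer k = (if i < \<bar>k\<bar> then scale (psign k) (D (-i) i v - D k (-k) v) else 0)" for k
  have summand: "F (-i) k (scale (psign k) (D k i v)) =
      (if k = i then F (-i) i (D i i v) else 0)
    - (if k = -i then scale (lam i) (D (-i) i v) else 0) + outer k" if k: "k \<in> I" for k
  proof -
    consider "k = i" | "k = -i" | "\<bar>k\<bar> < i" | "i < \<bar>k\<bar>"
      by linarith
    then show ?thesis
    proof cases
      case 3
      then show ?thesis
        using Cop_raising_zero[OF k iI(1)] k iI by (auto simp: D_def outer_def F_zero)
    qed (use iI k i in \<open>auto simp: D_def outer_def psign_def par_def F_scale F_minus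
           F_uminus_uminus Cop_uminus_diag_weight F_uminus_Cop_outer\<close>)
  qed
  have "sum outer I = 0"
  proof (rule sum_Idx_odd_eq_0)
    fix k assume k: "k \<in> I"
    have "D (-k) (-(-k)) v = D k (-k) v"
      using Cop_uminus_uminus[OF k uminus_in_Idx[OF k], of "2*n" v] by (simp add: D_def)
    then show "outer (-k) = - outer k"
      using Idx_nonzero[OF k] by (simp add: outer_def psign_uminus)
  qed
  then show ?thesis
    using iI by (simp add: D_def[symmetric] Cop_Suc_Suc left_mult_def summand sum.distrib
        sum_subtractf cong: sum.cong)
qed

end

theorem mainTheorem8:
  fixes N :: nat and scale :: "complex \<Rightarrow> 'v::ab_group_add \<Rightarrow> 'v"
    and F :: "int \<Rightarrow> int \<Rightarrow> 'v \<Rightarrow> 'v" and v :: 'v and lam :: "int \<Rightarrow> complex"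
  assumes "N \<ge> 1"
    and rep: "is_qrep N scale F"
    and hw: "\<forall>i\<in>Idx N. \<forall>j\<in>Idx N. \<bar>i\<bar> < \<bar>j\<bar> \<longrightarrow> F i j v = 0"
    and wt: "\<forall>i\<in>{1..int N}. F i i v = scale (lam i) v"
    and m: "m \<ge> (1::nat)"
    and i: "i \<in> {1..int N}"
  shows "Cop N scale F (2*m) (-i) i v
         = F (-i) i (Cop N scale F (2*m - 1) i i v) - scale (lam i) (Cop N scale F (2*m - 1) (-i) i v)"
proof -
  interpret highest_weight N scale F v lam
    using rep hw wt by unfold_locales (auto simp: qrep_def)
  obtain n where "m = Suc n"
    using m not0_implies_Suc by fastforce
  then have "2*m = Suc (Suc (2*n))" "2*m - 1 = Suc (2*n)"
    by simp_all
  then show ?thesis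
    using Cop_even_uminus_diag[OF i] by simp
qed

end
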